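(* Let $n\ge2$, $\alpha,\beta>0$, $a=1/\alpha$, $b=1/\beta$, and let $1\le j_1<\dots<j_r\le n-1$. For $1\le j\le n-1$ let $\alpha_j$ be the event that box $(n-j,j)$ (on the second main diagonal) contains $\alpha$. If $j_k\le j_{k+1}-2$ for all $k=1,\dots,r-1$, then \[\mathbb{P}_{n,\alpha,\beta}(\alpha_{j_1},\dots,\alpha_{j_r})=\prod_{k=1}^{r}\frac{b+j_{r-k+1}-2r+2k-1}{(n+a+b-2r+2k-1)(n+a+b-2r+2k-2)}.\] Otherwise, $\mathbb{P}_{n,\alpha,\beta}(\alpha_{j_1},\dots,\alpha_{j_r})=0$.
   Context: A staircase tableau of size $n$ has boxes $(i,j)$ with $i,j\ge1$ and $i+j\le n+1$, rows numbered from the top and columns from the left. An $\alpha/\beta$-staircase tableau of size $n$ is a filling in which each box is empty or contains $\alpha$ or $\beta$, such that: all boxes in the same column and above an $\alpha$ are empty; all boxes in the same row and to the left of a $\beta$ are empty; every main-diagonal box (with $i+j=n+1$) contains a symbol. $\overline{\mathcal{S}}_n$ is the set of these. The weight is $wt(S)=\alpha^{N_\alpha}\beta^{N_\beta}$ ($N_\alpha,N_\beta$ the numbers of $\alpha$'s, $\beta$'s), and for $\alpha,\beta>0$, $\mathbb{P}_{n,\alpha,\beta}(S)=wt(S)/Z_n(\alpha,\beta)$ with $Z_n(\alpha,\beta)=\sum_{T\in\overline{\mathcal{S}}_n}wt(T)$. The second main diagonal consists of the boxes $(n-j,j)$, $1\le j\le n-1$. $\mathbb{P}_{n,\alpha,\beta}(E_1,\dots,E_r)$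 denotes the probability of the intersection of the events. *)

theory Defs
  imports Complex_Main
begin

datatype sym = Emp | SA | SB

definition boxes :: "nat \<Rightarrow> (nat \<times> nat) set" where
  "boxes n = {(i, j). 1 \<le> i \<and> 1 \<le> j \<and> i + j \<le> n + 1}"

text \<open>A filling is a function on pairs (row, column); it is required to be Emp outside the staircase.\<close>
definition staircase_tableaux :: "nat \<Rightarrow> (nat \<Rightarrow> nat \<Rightarrow> sym) set" where
  "staircase_tableaux n = {S.
     (\<forall>i j. (i, j) \<notin> boxes n \<longrightarrow> S i j = Emp) \<and>
     (\<forall>i j i'. (i, j) \<in> boxes n \<and> S i j = SA \<and> 1 \<le> i' \<and> i' < i \<longrightarrow> S i' j = Emp) \<and>
     (\<forall>i j j'. (i, j) \<in> boxes n \<and> S i j = SB \<and> 1 \<le> j' \<and> j' < j \<longrightarrow> S i j' = Emp) \<and>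
     (\<forall>i j. (i, j) \<in> boxes n \<and> i + j = n + 1 \<longrightarrow> S i j \<noteq> Emp)}"

definition wt :: "nat \<Rightarrow> real \<Rightarrow> real \<Rightarrow> (nat \<Rightarrow> nat \<Rightarrow> sym) \<Rightarrow> real" where
  "wt n \<alpha> \<beta> S = \<alpha> ^ card {(i, j) \<in> boxes n. S i j = SA} * \<beta> ^ card {(i, j) \<in> boxes n. S i j = SB}"

definition Zn :: "nat \<Rightarrow> real \<Rightarrow> real \<Rightarrow> real" where
  "Zn n \<alpha> \<beta> = (\<Sum>T\<in>staircase_tableaux n. wt n \<alpha> \<beta> T)"

definition Pstair :: "nat \<Rightarrow> real \<Rightarrow> real \<Rightarrow> (nat \<Rightarrow> nat \<Rightarrow> sym) set \<Rightarrow> real" where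
  "Pstair n \<alpha> \<beta> E = (\<Sum>S\<in>staircase_tableaux n \<inter> E. wt n \<alpha> \<beta> S) / Zn n \<alpha> \<beta>"

definition alpha_event :: "nat \<Rightarrow> nat \<Rightarrow> (nat \<Rightarrow> nat \<Rightarrow> sym) set" where
  "alpha_event n j = {S. S (n - j) j = SA}"

end

theory Submission
  imports Defs
begin

text \<open>
  A staircase tableau of size \<open>n + 1\<close> is a first column followed by a staircase tableau \<open>T\<close>
  of size \<open>n\<close>, and the admissible first columns depend on \<open>T\<close> only through the set of rows of
  \<open>T\<close> without a \<open>\<beta>\<close> (an entry of the new column lies to the left of its whole row). Weighting
  every tableau by \<open>x\<close> to the number of its \<open>\<beta>\<close>-free rows, the sum over the first column
  multiplies by \<open>\<alpha> x + \<beta>\<close> and replaces \<open>x\<close> by \<open>x + \<beta>\<close>. A prescribed \<open>\<alpha>\<close> on the second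
  diagonal of the first column forces the first two columns completely (\<open>\<alpha>\<close> above \<open>\<beta>\<close>, then a
  lone \<open>\<alpha>\<close>), so both are removed at once without changing \<open>x\<close>. Starting from
  \<open>x = \<beta> \<cdot> (1/\<beta>) = 1\<close>, this gives the numerator and \<open>Z\<^sub>n\<close> (no prescribed boxes) as rising
  factorials times a product over the prescribed boxes, and their quotient is the stated
  product. Two adjacent second-diagonal \<open>\<alpha>\<close>'s are impossible: the main-diagonal box between
  them holds \<open>\<alpha>\<close> or \<open>\<beta>\<close>, and either one empties one of them.
\<close>

lemma UNIV_sym: "(UNIV :: sym set) = {Emp, SA, SB}"
  using sym.exhaust by auto

lemma finite_UNIV_sym: "finite (UNIV :: sym set)"
  by (simp add: UNIV_sym)

lemma finite_fillings_supported_on: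
  assumes "finite A"
  shows "finite {c :: nat \<Rightarrow> sym. \<forall>i. i \<notin> A \<longrightarrow> c i = Emp}"
  using finite_set_of_finite_funs[OF assms finite_UNIV_sym, of Emp] by simp

lemma sum_prod_fun_upd:
  fixes w :: "'a \<Rightarrow> 'b :: comm_semiring_1"
  assumes "finite A" "b \<notin> A" "\<forall>c\<in>C. c b = e"
  shows "(\<Sum>c\<in>(\<lambda>c. c(b := s)) ` C. \<Prod>i\<in>insert b A. w (c i)) = w s * (\<Sum>c\<in>C. \<Prod>i\<in>A. w (c i))"
proof -
  have "inj_on (\<lambda>c. c(b := s)) C"
  proof (rule inj_onI)
    fix c c' assume "c \<in> C" "c' \<in> C" "c(b := s) = c'(b := s)"
    then show "c = c'"
      using assms(3) by (metis fun_upd_triv fun_upd_upd)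
  qed
  then have "(\<Sum>c\<in>(\<lambda>c. c(b := s)) ` C. \<Prod>i\<in>insert b A. w (c i))
      = (\<Sum>c\<in>C. \<Prod>i\<in>insert b A. w ((c(b := s)) i))"
    by (simp add: sum.reindex)
  also have "\<dots> = (\<Sum>c\<in>C. w s * (\<Prod>i\<in>A. w (c i)))"
  proof (rule sum.cong[OF refl])
    fix c
    have "(\<Prod>i\<in>A. w ((c(b := s)) i)) = (\<Prod>i\<in>A. w (c i))"
      using assms(2) by (intro prod.cong) auto
    then show "(\<Prod>i\<in>insert b A. w ((c(b := s)) i)) = w s * (\<Prod>i\<in>A. w (c i))"
      using assms(1,2) by simp
  qed
  finally show ?thesis
    by (simp add: sum_distrib_left)
qed

lemma sum_prod_insert_const:
  fixes w :: "'a \<Rightarrow> 'b :: comm_semiring_1"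
  assumes "finite A" "b \<notin> A" "\<forall>c\<in>C. c b = e"
  shows "(\<Sum>c\<in>C. \<Prod>i\<in>insert b A. w (c i)) = w e * (\<Sum>c\<in>C. \<Prod>i\<in>A. w (c i))"
  using assms by (simp add: sum_distrib_left)

lemma Max_insert_min:
  assumes "finite A" "A \<noteq> {}" "\<forall>a\<in>A. b < a"
  shows "Max (insert b A) = Max A" and "Max A \<noteq> b"
proof -
  have "b < Max A"
    using assms Max_in[OF assms(1,2)] by blast
  then show "Max (insert b A) = Max A" and "Max A \<noteq> b"
    using assms(1,2) by (simp_all add: Max_insert)
qed

lemma prod_if_eq_power_card:
  fixes u :: "'a :: comm_monoid_mult"
  shows "finite A \<Longrightarrow> (\<Prod>p\<in>A. if P p then u else 1) = u ^ card {p\<in>A. P p}"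
  by (simp add: prod.inter_filter[symmetric])

lemma stepwise_growth:
  fixes js :: "nat \<Rightarrow> nat"
  assumes "\<forall>k. i \<le> k \<and> k < i + m \<longrightarrow> js k + d \<le> js (Suc k)"
  shows "js i + d * m \<le> js (i + m)"
  using assms
proof (induction m)
  case (Suc m)
  then have "js i + d * m \<le> js (i + m)" "js (i + m) + d \<le> js (Suc (i + m))"
    by auto
  then show ?case
    by simp
qed simp

lemma ball_atLeastAtMost_Suc_split:
  "(\<forall>k\<in>{1..Suc r}. P k) \<longleftrightarrow> P 1 \<and> (\<forall>k\<in>{1..r}. P (Suc k))"
proof
  assume "P 1 \<and> (\<forall>k\<in>{1..r}. P (Suc k))"
  then show "\<forall>k\<in>{1..Suc r}. P k"
    by (metis atLeastAtMost_iff le_Suc_eq not0_implies_Suc not_less_eq_eq One_nat_def)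
qed auto

lemma pochhammer_double:
  fixes c :: "'a :: comm_ring_1"
  shows "pochhammer c (2 * r) = (\<Prod>k=1..r. (c + 2 * of_nat k - 2) * (c + 2 * of_nat k - 1))"
proof (induction r)
  case (Suc r)
  have "pochhammer c (2 * Suc r)
      = pochhammer c (2 * r) * (c + of_nat (2 * r)) * (c + of_nat (Suc (2 * r)))"
    by (simp add: pochhammer_Suc)
  then show ?case
    using Suc by (simp add: algebra_simps)
qed simp

section \<open>Admissible first columns\<close>

text \<open>The factor \<open>x\<close> marks a row that stays without \<open>\<beta>\<close>.\<close>

definition col_entry_weight :: "real \<Rightarrow> real \<Rightarrow> real \<Rightarrow> sym \<Rightarrow> real" where
  "col_entry_weight \<alpha> \<beta> x s = (case s of Emp \<Rightarrow> x | SA \<Rightarrow> \<alpha> * x | SB \<Rightarrow> \<beta>)"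

text \<open>First columns that may be put in front of a tableau whose \<open>\<beta>\<close>-free rows, together with
  the new bottom row \<open>Max F\<close>, form \<open>F\<close>.\<close>

definition admissible_columns :: "nat set \<Rightarrow> (nat \<Rightarrow> sym) set" where
  "admissible_columns F = {c. (\<forall>i. i \<notin> F \<longrightarrow> c i = Emp) \<and> c (Max F) \<noteq> Emp \<and>
                               (\<forall>i i'. c i = SA \<and> i' < i \<longrightarrow> c i' = Emp)}"

definition alpha_free_columns :: "nat set \<Rightarrow> (nat \<Rightarrow> sym) set" where
  "alpha_free_columns F = {c. (\<forall>i. i \<notin> F \<longrightarrow> c i = Emp) \<and> c (Max F) = SB \<and> (\<forall>i. c i \<noteq> SA)}"

lemma finite_admissible_columns: "finite F \<Longrightarrow> finite (admissible_columns F)"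
  by (rule finite_subset[OF _ finite_fillings_supported_on]) (auto simp: admissible_columns_def)

lemma finite_alpha_free_columns: "finite F \<Longrightarrow> finite (alpha_free_columns F)"
  by (rule finite_subset[OF _ finite_fillings_supported_on]) (auto simp: alpha_free_columns_def)

text \<open>Adding a new topmost row \<open>b\<close>: an entry in row \<open>b\<close> forbids \<open>\<alpha>\<close>'s below it.\<close>

lemma alpha_free_columns_insert_min:
  assumes "finite A" "A \<noteq> {}" "\<forall>a\<in>A. b < a"
  shows "alpha_free_columns (insert b A) =
           alpha_free_columns A \<union> (\<lambda>c. c(b := SB)) ` alpha_free_columns A"
proof
  note mx = Max_insert_min[OF assms]
  show "alpha_free_columns (insert b A)
          \<subseteq> alpha_free_columns A \<union> (\<lambda>c. c(b := SB)) ` alpha_free_columns A"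
  proof
    fix c assume c: "c \<in> alpha_free_columns (insert b A)"
    show "c \<in> alpha_free_columns A \<union> (\<lambda>c. c(b := SB)) ` alpha_free_columns A"
    proof (cases "c b")
      case Emp
      then show ?thesis using c mx by (auto simp: alpha_free_columns_def)
    next
      case SA
      then show ?thesis using c by (auto simp: alpha_free_columns_def)
    next
      case SB
      have "c(b := Emp) \<in> alpha_free_columns A"
        using c mx by (auto simp: alpha_free_columns_def)
      moreover have "c = (c(b := Emp))(b := SB)"
        using SB by auto
      ultimately show ?thesis by blast
    qed
  qed
next
  show "alpha_free_columns A \<union> (\<lambda>c. c(b := SB)) ` alpha_free_columns A
          \<subseteq> alpha_free_columns (insert b A)"
    using Max_insert_min[OF assms] by (auto simp: alpha_free_columns_def split: if_split_asm)
qed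

lemma sum_alpha_free_columns:
  assumes "finite A" "A \<noteq> {}"
  shows "(\<Sum>c\<in>alpha_free_columns A. \<Prod>i\<in>A. col_entry_weight \<alpha> \<beta> x (c i))
           = \<beta> * (x + \<beta>) ^ (card A - 1)"
  using assms
proof (induction A rule: finite_linorder_min_induct)
  case empty
  then show ?case by simp
next
  case (insert b A)
  show ?case
  proof (cases "A = {}")
    case True
    have "alpha_free_columns {b} = {(\<lambda>i. if i = b then SB else Emp)}"
      by (auto simp: alpha_free_columns_def split: if_split_asm)
    then show ?thesis
      using True by (simp add: col_entry_weight_def)
  next
    case False
    let ?C = "alpha_free_columns A"
    let ?w = "col_entry_weight \<alpha> \<beta> x"
    let ?S = "\<Sum>c\<in>?C. \<Prod>i\<in>A. ?w (c i)"
    have b: "b \<notin> A" "\<forall>c\<in>?C. c b = Emp"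
      using insert.hyps by (auto simp: alpha_free_columns_def)
    have disj: "?C \<inter> (\<lambda>c. c(b := SB)) ` ?C = {}"
      using b by auto
    have "(\<Sum>c\<in>alpha_free_columns (insert b A). \<Prod>i\<in>insert b A. ?w (c i))
        = (\<Sum>c\<in>?C. \<Prod>i\<in>insert b A. ?w (c i)) + (\<Sum>c\<in>(\<lambda>c. c(b := SB)) ` ?C. \<Prod>i\<in>insert b A. ?w (c i))"
      unfolding alpha_free_columns_insert_min[OF insert.hyps(1) False insert.hyps(2)]
      using disj finite_alpha_free_columns[OF insert.hyps(1)] by (simp add: sum.union_disjoint)
    also have "\<dots> = x * ?S + \<beta> * ?S"
      unfolding sum_prod_insert_const[OF insert.hyps(1) b] sum_prod_fun_upd[OF insert.hyps(1) b]
      by (simp add: col_entry_weight_def)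
    also have "\<dots> = \<beta> * (x + \<beta>) ^ (card (insert b A) - 1)"
    proof -
      obtain k where k: "card A = Suc k"
        using insert.hyps(1) False by (metis card_0_eq not0_implies_Suc)
      then have "card (insert b A) - 1 = Suc k"
        using insert.hyps(1) b(1) by simp
      then show ?thesis
        using insert.IH[OF False] k by (simp add: algebra_simps)
    qed
    finally show ?thesis .
  qed
qed

lemma admissible_columns_insert_min:
  assumes "finite A" "A \<noteq> {}" "\<forall>a\<in>A. b < a"
  shows "admissible_columns (insert b A) =
           admissible_columns A \<union> ((\<lambda>c. c(b := SA)) ` alpha_free_columns A \<union>
                                    (\<lambda>c. c(b := SB)) ` alpha_free_columns A)"
    (is "?L = ?R")
proof
  note mx = Max_insert_min[OF assms]
  show "?L \<subseteq> ?R"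
  proof
    fix c assume c: "c \<in> ?L"
    show "c \<in> ?R"
    proof (cases "c b = Emp")
      case True
      then show ?thesis using c mx by (auto simp: admissible_columns_def)
    next
      case False
      have no_alpha: "c i \<noteq> SA" if "i \<noteq> b" for i
      proof
        assume "c i = SA"
        moreover have "i \<in> insert b A"
          using c \<open>c i = SA\<close> by (auto simp: admissible_columns_def)
        ultimately show False
          using c False assms(3) that by (auto simp: admissible_columns_def)
      qed
      have bottom: "c (Max A) \<noteq> Emp"
        using c mx by (auto simp: admissible_columns_def)
      have "c(b := Emp) \<in> alpha_free_columns A"
        unfolding alpha_free_columns_def
      proof (intro CollectI conjI allI impI)
        show "(c(b := Emp)) (Max A) = SB"
          using bottom no_alpha[of "Max A"] mx(2) by (cases "c (Max A)") auto
        show "(c(b := Emp)) i \<noteq> SA" for i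
          using no_alpha[of i] by auto
        show "(c(b := Emp)) i = Emp" if "i \<notin> A" for i
          using c that by (auto simp: admissible_columns_def)
      qed
      moreover have "c = (c(b := Emp))(b := SA) \<or> c = (c(b := Emp))(b := SB)"
        using False by (cases "c b") (auto simp: fun_eq_iff)
      ultimately show ?thesis by blast
    qed
  qed
next
  show "?R \<subseteq> ?L"
    using Max_insert_min[OF assms] assms(3)
    by (auto simp: admissible_columns_def alpha_free_columns_def split: if_split_asm)
      (metis less_asym)
qed

lemma admissible_columns_singleton:
  "admissible_columns {b} = {(\<lambda>i. if i = b then SA else Emp), (\<lambda>i. if i = b then SB else Emp)}"
proof
  show "admissible_columns {b} \<subseteq> {(\<lambda>i. if i = b then SA else Emp), (\<lambda>i. if i = b then SB else Emp)}"
  proof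
    fix c assume c: "c \<in> admissible_columns {b}"
    then have "c b = SA \<or> c b = SB"
      by (cases "c b") (auto simp: admissible_columns_def)
    moreover have "c i = Emp" if "i \<noteq> b" for i
      using c that by (auto simp: admissible_columns_def)
    ultimately show "c \<in> {(\<lambda>i. if i = b then SA else Emp), (\<lambda>i. if i = b then SB else Emp)}"
      by (auto simp: fun_eq_iff)
  qed
qed (auto simp: admissible_columns_def split: if_split_asm)

lemma sum_admissible_columns:
  assumes "finite A" "A \<noteq> {}"
  shows "(\<Sum>c\<in>admissible_columns A. \<Prod>i\<in>A. col_entry_weight \<alpha> \<beta> x (c i))
           = (\<alpha> * x + \<beta>) * (x + \<beta>) ^ (card A - 1)"
  using assms
proof (induction A rule: finite_linorder_min_induct)
  case empty
  then show ?case by simp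
next
  case (insert b A)
  show ?case
  proof (cases "A = {}")
    case True
    have "(\<lambda>i::nat. if i = b then SA else Emp) \<noteq> (\<lambda>i. if i = b then SB else Emp)"
      by (auto simp: fun_eq_iff)
    then show ?thesis
      using True by (simp add: admissible_columns_singleton col_entry_weight_def)
  next
    case False
    let ?C = "admissible_columns A" and ?N = "alpha_free_columns A"
    let ?w = "col_entry_weight \<alpha> \<beta> x"
    have b: "b \<notin> A" "\<forall>c\<in>?C. c b = Emp" "\<forall>c\<in>?N. c b = Emp"
      using insert.hyps by (auto simp: admissible_columns_def alpha_free_columns_def)
    have disj: "?C \<inter> ((\<lambda>c. c(b := SA)) ` ?N \<union> (\<lambda>c. c(b := SB)) ` ?N) = {}"
        "(\<lambda>c. c(b := SA)) ` ?N \<inter> (\<lambda>c. c(b := SB)) ` ?N = {}"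
      using b by (auto simp: fun_eq_iff) (metis fun_upd_same sym.distinct(6))
    have fin: "finite ?C" "finite ?N"
      using insert.hyps(1) finite_admissible_columns finite_alpha_free_columns by auto
    have "(\<Sum>c\<in>admissible_columns (insert b A). \<Prod>i\<in>insert b A. ?w (c i))
        = (\<Sum>c\<in>?C. \<Prod>i\<in>insert b A. ?w (c i))
          + ((\<Sum>c\<in>(\<lambda>c. c(b := SA)) ` ?N. \<Prod>i\<in>insert b A. ?w (c i))
             + (\<Sum>c\<in>(\<lambda>c. c(b := SB)) ` ?N. \<Prod>i\<in>insert b A. ?w (c i)))"
      unfolding admissible_columns_insert_min[OF insert.hyps(1) False insert.hyps(2)]
      using disj fin by (simp add: sum.union_disjoint)
    also have "\<dots> = x * (\<Sum>c\<in>?C. \<Prod>i\<in>A. ?w (c i)) + (\<alpha> * x + \<beta>) * (\<Sum>c\<in>?N. \<Prod>i\<in>A. ?w (c i))"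
      unfolding sum_prod_insert_const[OF insert.hyps(1) b(1,2)]
        sum_prod_fun_upd[OF insert.hyps(1) b(1,3)]
      by (simp add: col_entry_weight_def algebra_simps)
    also have "\<dots> = (\<alpha> * x + \<beta>) * (x + \<beta>) ^ (card (insert b A) - 1)"
    proof -
      obtain k where k: "card A = Suc k"
        using insert.hyps(1) False by (metis card_0_eq not0_implies_Suc)
      then have "card (insert b A) - 1 = Suc k"
        using insert.hyps(1) b(1) by simp
      then show ?thesis
        using insert.IH[OF False] sum_alpha_free_columns[OF insert.hyps(1) False] k
        by (simp add: algebra_simps)
    qed
    finally show ?thesis .
  qed
qed

lemma admissible_columns_alpha_at_Max:
  assumes "finite A" "A \<noteq> {}"
  shows "admissible_columns A \<inter> {c. c (Max A) = SA} = {(\<lambda>i. if i = Max A then SA else Emp)}"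
proof
  show "admissible_columns A \<inter> {c. c (Max A) = SA} \<subseteq> {(\<lambda>i. if i = Max A then SA else Emp)}"
  proof
    fix c assume c: "c \<in> admissible_columns A \<inter> {c. c (Max A) = SA}"
    have "c i = Emp" if "i \<noteq> Max A" for i
    proof (cases "i \<in> A")
      case True
      then have "i < Max A"
        using that assms Max_ge le_neq_implies_less by blast
      then show ?thesis
        using c by (auto simp: admissible_columns_def)
    qed (use c in \<open>auto simp: admissible_columns_def\<close>)
    then show "c \<in> {(\<lambda>i. if i = Max A then SA else Emp)}"
      using c by auto
  qed
qed (use assms in \<open>auto simp: admissible_columns_def split: if_split_asm\<close>)

lemma sum_admissible_columns_alpha_at_Max:
  assumes "finite A" "A \<noteq> {}"
  shows "(\<Sum>c\<in>admissible_columns A \<inter> {c. c (Max A) = SA}. \<Prod>i\<in>A. col_entry_weight \<alpha> \<beta> x (c i))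
           = \<alpha> * x * x ^ (card A - 1)"
proof -
  have M: "Max A \<in> A"
    using assms by simp
  let ?c = "\<lambda>i. if i = Max A then SA else Emp"
  let ?w = "col_entry_weight \<alpha> \<beta> x"
  have "(\<Prod>i\<in>A. ?w (?c i)) = ?w (?c (Max A)) * (\<Prod>i\<in>A - {Max A}. ?w (?c i))"
    by (rule prod.remove[OF assms(1) M])
  also have "(\<Prod>i\<in>A - {Max A}. ?w (?c i)) = (\<Prod>i\<in>A - {Max A}. ?w Emp)"
    by (rule prod.cong) auto
  also have "?w (?c (Max A)) * (\<Prod>i\<in>A - {Max A}. ?w Emp) = \<alpha> * x * x ^ (card A - 1)"
    using assms M by (simp add: col_entry_weight_def)
  finally show ?thesis
    using admissible_columns_alpha_at_Max[OF assms] by simp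
qed

text \<open>An \<open>\<alpha>\<close> in the row just above the bottom row \<open>Max A\<close> empties all rows above it, and the
  bottom entry, which is nonempty, cannot be another \<open>\<alpha>\<close>.\<close>

lemma admissible_columns_alpha_above_Max:
  assumes "finite A" "m \<in> A" "Max A = Suc m"
  shows "admissible_columns A \<inter> {c. c m = SA}
           = {(\<lambda>i. if i = m then SA else if i = Suc m then SB else Emp)}"
proof
  show "admissible_columns A \<inter> {c. c m = SA}
          \<subseteq> {(\<lambda>i. if i = m then SA else if i = Suc m then SB else Emp)}"
  proof
    fix c assume c: "c \<in> admissible_columns A \<inter> {c. c m = SA}"
    have bottom: "c (Suc m) = SB"
      using c assms(3)
      by (cases "c (Suc m)") (auto simp: admissible_columns_def, metis lessI sym.distinct(1))
    have "c i = Emp" if "i \<noteq> m" "i \<noteq> Suc m" for i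
    proof (cases "i \<in> A")
      case True
      then have "i < m"
        using that assms Max_ge[OF assms(1), of i] by linarith
      then show ?thesis
        using c by (auto simp: admissible_columns_def)
    qed (use c in \<open>auto simp: admissible_columns_def\<close>)
    then show "c \<in> {(\<lambda>i. if i = m then SA else if i = Suc m then SB else Emp)}"
      using c bottom by auto
  qed
next
  have "Suc m \<in> A"
    using assms Max_in[OF assms(1)] by force
  then show "{(\<lambda>i. if i = m then SA else if i = Suc m then SB else Emp)}
               \<subseteq> admissible_columns A \<inter> {c. c m = SA}"
    using assms by (auto simp: admissible_columns_def split: if_split_asm)
qed

lemma sum_admissible_columns_alpha_above_Max:
  assumes "finite A" "m \<in> A" "Max A = Suc m"
  shows "(\<Sum>c\<in>admissible_columns A \<inter> {c. c m = SA}. \<Prod>i\<in>A. col_entry_weight \<alpha> \<beta> x (c i))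
           = \<alpha> * x * \<beta> * x ^ (card A - 2)"
proof -
  let ?c = "\<lambda>i. if i = m then SA else if i = Suc m then SB else Emp"
  let ?w = "col_entry_weight \<alpha> \<beta> x"
  have M: "Suc m \<in> A - {m}"
    using assms Max_in[OF assms(1)] by force
  have "(\<Prod>i\<in>A. ?w (?c i)) = ?w (?c m) * (\<Prod>i\<in>A - {m}. ?w (?c i))"
    by (rule prod.remove[OF assms(1,2)])
  also have "(\<Prod>i\<in>A - {m}. ?w (?c i)) = ?w (?c (Suc m)) * (\<Prod>i\<in>A - {m} - {Suc m}. ?w (?c i))"
    by (rule prod.remove[OF _ M]) (use assms(1) in simp)
  also have "(\<Prod>i\<in>A - {m} - {Suc m}. ?w (?c i)) = (\<Prod>i\<in>A - {m} - {Suc m}. ?w Emp)"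
    by (rule prod.cong) auto
  also have "(\<Prod>i\<in>A - {m} - {Suc m}. ?w Emp) = x ^ (card A - 2)"
    using assms M by (simp add: col_entry_weight_def card_Diff_subset numeral_2_eq_2)
  finally show ?thesis
    using admissible_columns_alpha_above_Max[OF assms] by (simp add: col_entry_weight_def)
qed

section \<open>Removing the first column\<close>

abbreviation stair :: "nat \<Rightarrow> (nat \<Rightarrow> nat \<Rightarrow> sym) set" where
  "stair \<equiv> staircase_tableaux"

definition add_column :: "(nat \<Rightarrow> sym) \<Rightarrow> (nat \<Rightarrow> nat \<Rightarrow> sym) \<Rightarrow> nat \<Rightarrow> nat \<Rightarrow> sym" where
  "add_column c T = (\<lambda>i j. if j = 0 then Emp else if j = 1 then c i else T i (j - 1))"

definition drop_column :: "(nat \<Rightarrow> nat \<Rightarrow> sym) \<Rightarrow> nat \<Rightarrow> nat \<Rightarrow> sym" where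
  "drop_column T = (\<lambda>i j. if j = 0 then Emp else T i (Suc j))"

definition first_column :: "(nat \<Rightarrow> nat \<Rightarrow> sym) \<Rightarrow> nat \<Rightarrow> sym" where
  "first_column T = (\<lambda>i. T i 1)"

definition free_rows :: "nat \<Rightarrow> (nat \<Rightarrow> nat \<Rightarrow> sym) \<Rightarrow> nat set" where
  "free_rows n T = {i \<in> {1..n}. \<forall>j. T i j \<noteq> SB}"

definition column_rows :: "nat \<Rightarrow> (nat \<Rightarrow> nat \<Rightarrow> sym) \<Rightarrow> nat set" where
  "column_rows n T = insert (Suc n) (free_rows n T)"

lemma finite_free_rows [simp]: "finite (free_rows n T)"
  by (simp add: free_rows_def)

lemma finite_column_rows [simp]: "finite (column_rows n T)"
  by (simp add: column_rows_def)

lemma column_rows_not_empty [simp]: "column_rows n T \<noteq> {}"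
  by (simp add: column_rows_def)

lemma Max_column_rows [simp]: "Max (column_rows n T) = Suc n"
  unfolding column_rows_def by (rule Max_eqI) (auto simp: free_rows_def)

lemma card_column_rows: "card (column_rows n T) = Suc (card (free_rows n T))"
  unfolding column_rows_def by (subst card_insert_disjoint) (auto simp: free_rows_def)

lemma mem_boxes_iff: "(i, j) \<in> boxes n \<longleftrightarrow> 1 \<le> i \<and> 1 \<le> j \<and> i + j \<le> n + 1"
  by (simp add: boxes_def)

lemma staircase_tableauxD:
  assumes "T \<in> stair n"
  shows "(i, j) \<notin> boxes n \<Longrightarrow> T i j = Emp"
    and "T i j = SA \<Longrightarrow> 1 \<le> i' \<Longrightarrow> i' < i \<Longrightarrow> T i' j = Emp"
    and "T i j = SB \<Longrightarrow> 1 \<le> j' \<Longrightarrow> j' < j \<Longrightarrow> T i j' = Emp"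
    and "1 \<le> i \<Longrightarrow> 1 \<le> j \<Longrightarrow> i + j = n + 1 \<Longrightarrow> T i j \<noteq> Emp"
proof -
  note D = assms[unfolded staircase_tableaux_def mem_Collect_eq]
  show outside: "(i, j) \<notin> boxes n \<Longrightarrow> T i j = Emp" for i j
    using D by blast
  show "T i' j = Emp" if "T i j = SA" "1 \<le> i'" "i' < i"
  proof -
    have "(i, j) \<in> boxes n"
      using outside that(1) by force
    with that show ?thesis
      using D by blast
  qed
  show "T i j' = Emp" if "T i j = SB" "1 \<le> j'" "j' < j"
  proof -
    have "(i, j) \<in> boxes n"
      using outside that(1) by force
    with that show ?thesis
      using D by blast
  qed
  show "T i j \<noteq> Emp" if "1 \<le> i" "1 \<le> j" "i + j = n + 1"
  proof -
    have "(i, j) \<in> boxes n"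
      using that by (simp add: mem_boxes_iff)
    with that show ?thesis
      using D by blast
  qed
qed

lemma staircase_tableauxI:
  assumes "\<And>i j. (i, j) \<notin> boxes n \<Longrightarrow> T i j = Emp"
    and "\<And>i j i'. T i j = SA \<Longrightarrow> 1 \<le> i' \<Longrightarrow> i' < i \<Longrightarrow> T i' j = Emp"
    and "\<And>i j j'. T i j = SB \<Longrightarrow> 1 \<le> j' \<Longrightarrow> j' < j \<Longrightarrow> T i j' = Emp"
    and "\<And>i j. 1 \<le> i \<Longrightarrow> 1 \<le> j \<Longrightarrow> i + j = n + 1 \<Longrightarrow> T i j \<noteq> Emp"
  shows "T \<in> stair n"
  unfolding staircase_tableaux_def mem_Collect_eq
proof (intro conjI allI impI)
  fix i j assume "(i, j) \<in> boxes n \<and> i + j = n + 1"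
  then show "T i j \<noteq> Emp"
    using assms(4) by (auto simp: mem_boxes_iff)
qed (use assms in blast)+

lemma add_column_in_staircase_tableaux:
  assumes T: "T \<in> stair n" and c: "c \<in> admissible_columns (column_rows n T)"
  shows "add_column c T \<in> stair (Suc n)"
proof (rule staircase_tableauxI)
  note TD = staircase_tableauxD[OF T]
  have outside: "c i = Emp" if "i \<notin> column_rows n T" for i
    using c that by (auto simp: admissible_columns_def)
  {
    fix i j assume nb: "(i, j) \<notin> boxes (Suc n)"
    consider "j = 0" | "j = 1" | "j \<ge> 2"
      by linarith
    then show "add_column c T i j = Emp"
    proof cases
      case 2
      then have "i \<notin> column_rows n T"
        using nb by (auto simp: mem_boxes_iff column_rows_def free_rows_def)
      then show ?thesis
        using 2 outside by (simp add: add_column_def)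
    next
      case 3
      then have "(i, j - 1) \<notin> boxes n"
        using nb by (auto simp: mem_boxes_iff)
      then show ?thesis
        using 3 TD(1) by (simp add: add_column_def)
    qed (simp add: add_column_def)
  next
    fix i j i' assume "add_column c T i j = SA" "1 \<le> i'" "i' < i"
    then show "add_column c T i' j = Emp"
      using TD(2)[of i "j - 1" i'] c
      by (auto simp: add_column_def admissible_columns_def split: if_split_asm)
  next
    fix i j j' assume h: "add_column c T i j = SB" "1 \<le> j'" "j' < j"
    then have "j \<ge> 2" and Tij: "T i (j - 1) = SB"
      by (auto simp: add_column_def split: if_split_asm)
    have "(i, j - 1) \<in> boxes n"
      using TD(1)[of i "j - 1"] Tij by force
    then have "i \<notin> column_rows n T"
      using Tij by (auto simp: column_rows_def free_rows_def mem_boxes_iff)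
    then have "c i = Emp"
      by (rule outside)
    then show "add_column c T i j' = Emp"
      using h \<open>j \<ge> 2\<close> TD(3)[of i "j - 1" "j' - 1"] Tij by (auto simp: add_column_def)
  next
    fix i j assume "1 \<le> i" "1 \<le> j" "i + j = Suc n + 1"
    then show "add_column c T i j \<noteq> Emp"
      using c TD(4)[of i "j - 1"] by (auto simp: add_column_def admissible_columns_def)
  }
qed

lemma drop_column_in_staircase_tableaux:
  assumes T: "T \<in> stair (Suc n)"
  shows "drop_column T \<in> stair n"
proof (rule staircase_tableauxI)
  note TD = staircase_tableauxD[OF T]
  fix i j assume "(i, j) \<notin> boxes n"
  then show "drop_column T i j = Emp"
    using TD(1)[of i "Suc j"] by (auto simp: drop_column_def mem_boxes_iff)
next
  fix i j i' assume "drop_column T i j = SA" "1 \<le> i'" "i' < i"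
  then show "drop_column T i' j = Emp"
    using staircase_tableauxD(2)[OF T, of i "Suc j" i']
    by (auto simp: drop_column_def split: if_split_asm)
next
  fix i j j' assume "drop_column T i j = SB" "1 \<le> j'" "j' < j"
  then show "drop_column T i j' = Emp"
    using staircase_tableauxD(3)[OF T, of i "Suc j" "Suc j'"]
    by (auto simp: drop_column_def split: if_split_asm)
next
  fix i j assume "1 \<le> i" "1 \<le> j" "i + j = n + 1"
  then show "drop_column T i j \<noteq> Emp"
    using staircase_tableauxD(4)[OF T, of i "Suc j"] by (auto simp: drop_column_def)
qed

lemma first_column_admissible:
  assumes T: "T \<in> stair (Suc n)"
  shows "first_column T \<in> admissible_columns (column_rows n (drop_column T))"
proof -
  note TD = staircase_tableauxD[OF T]
  have outside: "T i 1 = Emp" if "i \<notin> column_rows n (drop_column T)" for i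
  proof (cases "1 \<le> i \<and> i \<le> n")
    case True
    then have "i \<notin> free_rows n (drop_column T)"
      using that by (simp add: column_rows_def)
    then obtain j where "drop_column T i j = SB"
      using True by (auto simp: free_rows_def)
    then have "T i (Suc j) = SB" "1 \<le> j"
      by (auto simp: drop_column_def split: if_split_asm)
    then show ?thesis
      using TD(3)[of i "Suc j" 1] by auto
  next
    case False
    then show ?thesis
      using TD(1)[of i 1] that by (auto simp: mem_boxes_iff column_rows_def)
  qed
  have above_alpha: "T i' 1 = Emp" if "T i 1 = SA" "i' < i" for i i'
  proof (cases "i' = 0")
    case True
    then show ?thesis
      using TD(1)[of 0 1] by (auto simp: mem_boxes_iff)
  qed (use TD(2)[of i 1 i'] that in auto)
  show ?thesis
    unfolding admissible_columns_def first_column_def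
    using outside above_alpha TD(4)[of "Suc n" 1] by auto
qed

lemma add_column_first_drop_column:
  assumes T: "T \<in> stair (Suc n)"
  shows "add_column (first_column T) (drop_column T) = T"
proof -
  have "add_column (first_column T) (drop_column T) i j = T i j" for i j
  proof (cases "j = 0")
    case True
    then show ?thesis
      using staircase_tableauxD(1)[OF T, of i j] by (simp add: add_column_def mem_boxes_iff)
  qed (auto simp: add_column_def first_column_def drop_column_def)
  then show ?thesis
    by (simp add: fun_eq_iff)
qed

lemma add_column_inj:
  assumes "T \<in> stair n" "T' \<in> stair n" "add_column c T = add_column c' T'"
  shows "c = c'" "T = T'"
proof -
  have "add_column c T i 1 = add_column c' T' i 1" for i
    using assms(3) by simp
  then show "c = c'"
    by (auto simp: add_column_def fun_eq_iff)
  have "T i j = T' i j" for i j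
  proof (cases "j = 0")
    case True
    then show ?thesis
      using staircase_tableauxD(1)[OF assms(1)] staircase_tableauxD(1)[OF assms(2)]
      by (auto simp: mem_boxes_iff)
  next
    case False
    have "add_column c T i (Suc j) = add_column c' T' i (Suc j)"
      using assms(3) by simp
    then show ?thesis
      using False by (simp add: add_column_def)
  qed
  then show "T = T'"
    by (auto simp: fun_eq_iff)
qed

lemma bij_betw_add_column:
  "bij_betw (\<lambda>(T, c). add_column c T)
     (SIGMA T:stair n. admissible_columns (column_rows n T)) (stair (Suc n))"
proof (rule bij_betwI')
  fix x y assume xy: "x \<in> (SIGMA T:stair n. admissible_columns (column_rows n T))"
    "y \<in> (SIGMA T:stair n. admissible_columns (column_rows n T))"
  obtain T1 c1 T2 c2 where "x = (T1, c1)" "y = (T2, c2)"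
    by (cases x, cases y)
  then show "((case x of (T, c) \<Rightarrow> add_column c T) = (case y of (T, c) \<Rightarrow> add_column c T)) = (x = y)"
    using xy add_column_inj[of T1 n T2 c1 c2] by auto
next
  fix x assume "x \<in> (SIGMA T:stair n. admissible_columns (column_rows n T))"
  then show "(case x of (T, c) \<Rightarrow> add_column c T) \<in> stair (Suc n)"
    using add_column_in_staircase_tableaux by auto
next
  fix T assume "T \<in> stair (Suc n)"
  then show "\<exists>x\<in>(SIGMA T:stair n. admissible_columns (column_rows n T)).
               T = (case x of (T, c) \<Rightarrow> add_column c T)"
    using drop_column_in_staircase_tableaux first_column_admissible add_column_first_drop_column
    by (intro bexI[of _ "(drop_column T, first_column T)"]) auto
qed

lemma staircase_tableaux_0: "stair 0 = {(\<lambda>i j. Emp)}"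
proof -
  have "boxes 0 = {}"
    by (auto simp: boxes_def)
  then show ?thesis
    unfolding staircase_tableaux_def by (auto simp: fun_eq_iff)
qed

lemma finite_staircase_tableaux: "finite (stair n)"
proof (induction n)
  case 0
  then show ?case
    by (simp add: staircase_tableaux_0)
next
  case (Suc n)
  then have "finite (SIGMA T:stair n. admissible_columns (column_rows n T))"
    using finite_admissible_columns by auto
  then show ?case
    using bij_betw_finite[OF bij_betw_add_column] by blast
qed

lemma sum_staircase_tableaux_Suc:
  "(\<Sum>T\<in>stair (Suc n). g T)
     = (\<Sum>T\<in>stair n. \<Sum>c\<in>admissible_columns (column_rows n T). g (add_column c T))"
proof -
  have "(\<Sum>T\<in>stair (Suc n). g T)
      = (\<Sum>(T, c)\<in>(SIGMA T:stair n. admissible_columns (column_rows n T)). g (add_column c T))"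
    using sum.reindex_bij_betw[OF bij_betw_add_column, of g] by (simp add: case_prod_beta')
  also have "\<dots> = (\<Sum>T\<in>stair n. \<Sum>c\<in>admissible_columns (column_rows n T). g (add_column c T))"
    by (rule sum.Sigma[symmetric]) (use finite_staircase_tableaux finite_admissible_columns in auto)
  finally show ?thesis .
qed

definition sym_weight :: "real \<Rightarrow> real \<Rightarrow> sym \<Rightarrow> real" where
  "sym_weight \<alpha> \<beta> s = (case s of Emp \<Rightarrow> 1 | SA \<Rightarrow> \<alpha> | SB \<Rightarrow> \<beta>)"

lemma finite_boxes [simp]: "finite (boxes n)"
  by (rule finite_subset[of _ "{0..n+1} \<times> {0..n+1}"]) (auto simp: boxes_def)

lemma wt_eq_prod_sym_weight: "wt n \<alpha> \<beta> T = (\<Prod>(i, j)\<in>boxes n. sym_weight \<alpha> \<beta> (T i j))"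
proof -
  have "(\<Prod>(i, j)\<in>boxes n. sym_weight \<alpha> \<beta> (T i j))
      = (\<Prod>p\<in>boxes n. (if case_prod T p = SA then \<alpha> else 1) * (if case_prod T p = SB then \<beta> else 1))"
    by (intro prod.cong refl) (auto simp: sym_weight_def split: sym.split)
  also have "\<dots> = \<alpha> ^ card {p\<in>boxes n. case_prod T p = SA}
                   * \<beta> ^ card {p\<in>boxes n. case_prod T p = SB}"
    by (simp add: prod.distrib prod_if_eq_power_card)
  finally show ?thesis
    by (simp add: wt_def case_prod_unfold)
qed

lemma boxes_Suc: "boxes (Suc n) = (\<lambda>i. (i, 1)) ` {1..Suc n} \<union> (\<lambda>(i, j). (i, Suc j)) ` boxes n"
proof
  show "boxes (Suc n) \<subseteq> (\<lambda>i. (i, 1)) ` {1..Suc n} \<union> (\<lambda>(i, j). (i, Suc j)) ` boxes n"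
  proof
    fix p assume "p \<in> boxes (Suc n)"
    then obtain i j where p: "p = (i, j)" "1 \<le> i" "1 \<le> j" "i + j \<le> Suc n + 1"
      by (auto simp: boxes_def)
    show "p \<in> (\<lambda>i. (i, 1)) ` {1..Suc n} \<union> (\<lambda>(i, j). (i, Suc j)) ` boxes n"
    proof (cases "j = 1")
      case False
      then have "(i, j - 1) \<in> boxes n" "p = (\<lambda>(i, j). (i, Suc j)) (i, j - 1)"
        using p by (auto simp: boxes_def)
      then show ?thesis
        by blast
    qed (use p in auto)
  qed
qed (auto simp: boxes_def)

lemma wt_add_column:
  assumes "T \<in> stair n"
  shows "wt (Suc n) \<alpha> \<beta> (add_column c T) = (\<Prod>i\<in>{1..Suc n}. sym_weight \<alpha> \<beta> (c i)) * wt n \<alpha> \<beta> T"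
proof -
  let ?w = "\<lambda>(i, j). sym_weight \<alpha> \<beta> (add_column c T i j)"
  have inj: "inj_on (\<lambda>i::nat. (i, 1::nat)) {1..Suc n}" "inj_on (\<lambda>(i, j). (i, Suc j)) (boxes n)"
    by (auto simp: inj_on_def)
  have "(\<lambda>i. (i, 1)) ` {1..Suc n} \<inter> (\<lambda>(i, j). (i, Suc j)) ` boxes n = {}"
    by (auto simp: boxes_def)
  then have "wt (Suc n) \<alpha> \<beta> (add_column c T)
      = prod ?w ((\<lambda>i. (i, 1)) ` {1..Suc n}) * prod ?w ((\<lambda>(i, j). (i, Suc j)) ` boxes n)"
    unfolding wt_eq_prod_sym_weight boxes_Suc by (intro prod.union_disjoint) auto
  also have "prod ?w ((\<lambda>i. (i, 1)) ` {1..Suc n}) = (\<Prod>i\<in>{1..Suc n}. sym_weight \<alpha> \<beta> (c i))"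
    by (subst prod.reindex[OF inj(1)]) (simp add: add_column_def)
  also have "prod ?w ((\<lambda>(i, j). (i, Suc j)) ` boxes n) = wt n \<alpha> \<beta> T"
    unfolding wt_eq_prod_sym_weight
    by (subst prod.reindex[OF inj(2)]) (auto simp: add_column_def boxes_def intro!: prod.cong)
  finally show ?thesis .
qed

lemma free_rows_add_column:
  assumes "T \<in> stair n"
  shows "free_rows (Suc n) (add_column c T) = {i \<in> column_rows n T. c i \<noteq> SB}"
proof -
  note outside = staircase_tableauxD(1)[OF assms]
  have row: "(\<forall>j. add_column c T i j \<noteq> SB) \<longleftrightarrow> c i \<noteq> SB \<and> (\<forall>j. T i j \<noteq> SB)" for i
  proof
    assume h: "\<forall>j. add_column c T i j \<noteq> SB"
    have "T i j \<noteq> SB" for j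
    proof (cases "j = 0")
      case True
      then show ?thesis
        using outside[of i 0] by (auto simp: boxes_def)
    next
      case False
      then show ?thesis
        using h[rule_format, of "Suc j"] by (simp add: add_column_def)
    qed
    moreover have "c i \<noteq> SB"
      using h[rule_format, of 1] by (simp add: add_column_def)
    ultimately show "c i \<noteq> SB \<and> (\<forall>j. T i j \<noteq> SB)"
      by blast
  qed (auto simp: add_column_def)
  have "T (Suc n) j \<noteq> SB" for j
    using outside[of "Suc n" j] by (auto simp: boxes_def)
  then show ?thesis
    unfolding free_rows_def column_rows_def row by auto
qed

lemma wt_free_rows_add_column:
  assumes T: "T \<in> stair n" and c: "c \<in> admissible_columns (column_rows n T)"
  shows "wt (Suc n) \<alpha> \<beta> (add_column c T) * x ^ card (free_rows (Suc n) (add_column c T))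
           = wt n \<alpha> \<beta> T * (\<Prod>i\<in>column_rows n T. col_entry_weight \<alpha> \<beta> x (c i))"
proof -
  have "column_rows n T \<subseteq> {1..Suc n}"
    by (auto simp: column_rows_def free_rows_def)
  moreover have "\<forall>i\<in>{1..Suc n} - column_rows n T. sym_weight \<alpha> \<beta> (c i) = 1"
    using c by (auto simp: admissible_columns_def sym_weight_def)
  ultimately have "(\<Prod>i\<in>{1..Suc n}. sym_weight \<alpha> \<beta> (c i))
      = (\<Prod>i\<in>column_rows n T. sym_weight \<alpha> \<beta> (c i))"
    by (intro prod.mono_neutral_right) auto
  moreover have "x ^ card (free_rows (Suc n) (add_column c T))
      = (\<Prod>i\<in>column_rows n T. if c i \<noteq> SB then x else 1)"
    unfolding free_rows_add_column[OF T] by (simp add: prod_if_eq_power_card)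
  moreover have "(\<Prod>i\<in>column_rows n T. sym_weight \<alpha> \<beta> (c i))
        * (\<Prod>i\<in>column_rows n T. if c i \<noteq> SB then x else 1)
      = (\<Prod>i\<in>column_rows n T. col_entry_weight \<alpha> \<beta> x (c i))"
    unfolding prod.distrib[symmetric]
    by (intro prod.cong refl) (auto simp: sym_weight_def col_entry_weight_def split: sym.split)
  ultimately show ?thesis
    using wt_add_column[OF T] by (simp add: algebra_simps)
qed

section \<open>Weighting tableaux by their \<open>\<beta>\<close>-free rows\<close>

definition free_row_gf :: "real \<Rightarrow> real \<Rightarrow> nat \<Rightarrow> ((nat \<Rightarrow> nat \<Rightarrow> sym) \<Rightarrow> bool) \<Rightarrow> real \<Rightarrow> real" where
  "free_row_gf \<alpha> \<beta> n P x = (\<Sum>T\<in>{T\<in>stair n. P T}. wt n \<alpha> \<beta> T * x ^ card (free_rows n T))"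

definition first_column_sum ::
    "real \<Rightarrow> real \<Rightarrow> real \<Rightarrow> nat \<Rightarrow> ((nat \<Rightarrow> nat \<Rightarrow> sym) \<Rightarrow> bool) \<Rightarrow> (nat \<Rightarrow> nat \<Rightarrow> sym) \<Rightarrow> real" where
  "first_column_sum \<alpha> \<beta> x n P T =
     (\<Sum>c\<in>{c\<in>admissible_columns (column_rows n T). P (add_column c T)}.
        \<Prod>i\<in>column_rows n T. col_entry_weight \<alpha> \<beta> x (c i))"

lemma free_row_gf_Suc:
  "free_row_gf \<alpha> \<beta> (Suc n) P x = (\<Sum>T\<in>stair n. wt n \<alpha> \<beta> T * first_column_sum \<alpha> \<beta> x n P T)"
proof -
  let ?g = "\<lambda>T. if P T then wt (Suc n) \<alpha> \<beta> T * x ^ card (free_rows (Suc n) T) else 0"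
  have "free_row_gf \<alpha> \<beta> (Suc n) P x = (\<Sum>T\<in>stair (Suc n). ?g T)"
    unfolding free_row_gf_def by (rule sum.inter_filter[OF finite_staircase_tableaux])
  also have "\<dots> = (\<Sum>T\<in>stair n. \<Sum>c\<in>admissible_columns (column_rows n T). ?g (add_column c T))"
    by (rule sum_staircase_tableaux_Suc)
  also have "\<dots> = (\<Sum>T\<in>stair n. \<Sum>c\<in>admissible_columns (column_rows n T).
                     if P (add_column c T)
                     then wt n \<alpha> \<beta> T * (\<Prod>i\<in>column_rows n T. col_entry_weight \<alpha> \<beta> x (c i)) else 0)"
    by (intro sum.cong refl) (simp add: wt_free_rows_add_column)
  also have "\<dots> = (\<Sum>T\<in>stair n. wt n \<alpha> \<beta> T * first_column_sum \<alpha> \<beta> x n P T)"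
    unfolding first_column_sum_def
    by (intro sum.cong refl)
      (simp add: sum.inter_filter[OF finite_admissible_columns, symmetric] sum_distrib_left)
  finally show ?thesis .
qed

lemma free_row_gf_Suc_eqI:
  assumes "\<And>T. T \<in> stair n \<Longrightarrow>
             first_column_sum \<alpha> \<beta> x n P T = (if Q T then K * y ^ card (free_rows n T) else 0)"
  shows "free_row_gf \<alpha> \<beta> (Suc n) P x = K * free_row_gf \<alpha> \<beta> n Q y"
proof -
  have "free_row_gf \<alpha> \<beta> (Suc n) P x
      = (\<Sum>T\<in>stair n. if Q T then K * (wt n \<alpha> \<beta> T * y ^ card (free_rows n T)) else 0)"
    unfolding free_row_gf_Suc by (intro sum.cong refl) (simp add: assms)
  also have "\<dots> = K * free_row_gf \<alpha> \<beta> n Q y"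
    unfolding free_row_gf_def
    by (simp add: sum.inter_filter[OF finite_staircase_tableaux, symmetric] sum_distrib_left)
  finally show ?thesis .
qed

lemma free_row_gf_0: "free_row_gf \<alpha> \<beta> 0 P x = (if P (\<lambda>i j. Emp) then 1 else 0)"
proof -
  have "boxes 0 = {}" "\<And>T. free_rows 0 T = {}"
    by (auto simp: boxes_def free_rows_def)
  moreover have "{T \<in> stair 0. P T} = (if P (\<lambda>i j. Emp) then {(\<lambda>i j. Emp)} else {})"
    by (auto simp: staircase_tableaux_0)
  ultimately show ?thesis
    by (simp add: free_row_gf_def wt_eq_prod_sym_weight)
qed

section \<open>Prescribed \<open>\<alpha>\<close>'s on the second diagonal\<close>

definition alphas_at :: "nat \<Rightarrow> nat \<Rightarrow> (nat \<Rightarrow> nat) \<Rightarrow> (nat \<Rightarrow> nat \<Rightarrow> sym) \<Rightarrow> bool" where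
  "alphas_at n r js T = (\<forall>k\<in>{1..r}. T (n - js k) (js k) = SA)"

lemma alphas_at_0 [simp]: "alphas_at n 0 js = (\<lambda>T. True)"
  by (simp add: alphas_at_def fun_eq_iff)

lemma alphas_at_add_column:
  assumes "\<forall>k\<in>{1..r}. 2 \<le> js k \<and> js k \<le> n"
  shows "alphas_at (Suc n) r js (add_column c T) \<longleftrightarrow> alphas_at n r (\<lambda>k. js k - 1) T"
proof -
  have "add_column c T (Suc n - js k) (js k) = T (n - (js k - 1)) (js k - 1)" if "k \<in> {1..r}" for k
  proof -
    have "2 \<le> js k"
      using assms that by auto
    moreover have "Suc n - js k = n - (js k - 1)"
      using \<open>2 \<le> js k\<close> by arith
    ultimately show ?thesis
      by (simp add: add_column_def)
  qed
  then show ?thesis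
    unfolding alphas_at_def by auto
qed

lemma free_row_gf_alphas_Suc:
  assumes "\<forall>k\<in>{1..r}. 2 \<le> js k \<and> js k \<le> n"
  shows "free_row_gf \<alpha> \<beta> (Suc n) (alphas_at (Suc n) r js) x
           = (\<alpha> * x + \<beta>) * free_row_gf \<alpha> \<beta> n (alphas_at n r (\<lambda>k. js k - 1)) (x + \<beta>)"
proof (rule free_row_gf_Suc_eqI)
  fix T assume "T \<in> stair n"
  have "{c\<in>admissible_columns (column_rows n T). alphas_at (Suc n) r js (add_column c T)}
      = (if alphas_at n r (\<lambda>k. js k - 1) T then admissible_columns (column_rows n T) else {})"
    using alphas_at_add_column[OF assms] by auto
  then show "first_column_sum \<alpha> \<beta> x n (alphas_at (Suc n) r js) T
      = (if alphas_at n r (\<lambda>k. js k - 1) T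
         then (\<alpha> * x + \<beta>) * (x + \<beta>) ^ card (free_rows n T) else 0)"
    unfolding first_column_sum_def
    using sum_admissible_columns[of "column_rows n T" \<alpha> \<beta> x] by (simp add: card_column_rows)
qed

lemma free_row_gf_alpha_bottom_Suc:
  assumes "\<forall>k\<in>{1..r}. 2 \<le> js k \<and> js k \<le> n"
  shows "free_row_gf \<alpha> \<beta> (Suc n) (\<lambda>T. T (Suc n) 1 = SA \<and> alphas_at (Suc n) r js T) x
           = \<alpha> * x * free_row_gf \<alpha> \<beta> n (alphas_at n r (\<lambda>k. js k - 1)) x"
proof (rule free_row_gf_Suc_eqI)
  fix T assume "T \<in> stair n"
  have "{c\<in>admissible_columns (column_rows n T).
           add_column c T (Suc n) 1 = SA \<and> alphas_at (Suc n) r js (add_column c T)}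
      = (if alphas_at n r (\<lambda>k. js k - 1) T
         then admissible_columns (column_rows n T) \<inter> {c. c (Max (column_rows n T)) = SA} else {})"
    using alphas_at_add_column[OF assms] by (auto simp: add_column_def)
  then show "first_column_sum \<alpha> \<beta> x n (\<lambda>T. T (Suc n) 1 = SA \<and> alphas_at (Suc n) r js T) T
      = (if alphas_at n r (\<lambda>k. js k - 1) T then \<alpha> * x * x ^ card (free_rows n T) else 0)"
    unfolding first_column_sum_def
    using sum_admissible_columns_alpha_at_Max[of "column_rows n T" \<alpha> \<beta> x]
    by (simp add: card_column_rows)
qed

lemma last_row_free_iff:
  assumes T: "T \<in> stair n" and "1 \<le> n"
  shows "n \<in> free_rows n T \<longleftrightarrow> T n 1 = SA"
proof -
  have "T n j = Emp" if "j \<noteq> 1" for j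
    using staircase_tableauxD(1)[OF T, of n j] that by (auto simp: mem_boxes_iff)
  moreover have "T n 1 \<noteq> Emp"
    using staircase_tableauxD(4)[OF T, of n 1] assms(2) by auto
  ultimately have "(\<forall>j. T n j \<noteq> SB) \<longleftrightarrow> T n 1 = SA"
    by (cases "T n 1") (metis sym.distinct)+
  then show ?thesis
    using assms(2) by (simp add: free_rows_def)
qed

lemma free_row_gf_alpha_above_bottom_Suc:
  assumes "\<forall>k\<in>{1..r}. 2 \<le> js k \<and> js k \<le> n" and "1 \<le> n"
  shows "free_row_gf \<alpha> \<beta> (Suc n) (\<lambda>T. T n 1 = SA \<and> alphas_at (Suc n) r js T) x
           = \<alpha> * \<beta> * free_row_gf \<alpha> \<beta> n (\<lambda>T. T n 1 = SA \<and> alphas_at n r (\<lambda>k. js k - 1) T) x"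
proof (rule free_row_gf_Suc_eqI)
  fix T assume T: "T \<in> stair n"
  have C: "{c\<in>admissible_columns (column_rows n T).
              add_column c T n 1 = SA \<and> alphas_at (Suc n) r js (add_column c T)}
      = (if alphas_at n r (\<lambda>k. js k - 1) T
         then admissible_columns (column_rows n T) \<inter> {c. c n = SA} else {})"
    using alphas_at_add_column[OF assms(1)] assms(2) by (auto simp: add_column_def)
  show "first_column_sum \<alpha> \<beta> x n (\<lambda>T. T n 1 = SA \<and> alphas_at (Suc n) r js T) T
      = (if T n 1 = SA \<and> alphas_at n r (\<lambda>k. js k - 1) T
         then \<alpha> * \<beta> * x ^ card (free_rows n T) else 0)"
  proof (cases "T n 1 = SA")
    case True
    then have "n \<in> free_rows n T"
      using last_row_free_iff[OF T assms(2)] by simp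
    then have "n \<in> column_rows n T" "card (free_rows n T) \<noteq> 0"
      by (auto simp: column_rows_def)
    then show ?thesis
      unfolding first_column_sum_def
      using True C sum_admissible_columns_alpha_above_Max[of "column_rows n T" n \<alpha> \<beta> x]
      by (simp add: card_column_rows power_eq_if)
  next
    case False
    then have "n \<notin> column_rows n T"
      using last_row_free_iff[OF T assms(2)] by (simp add: column_rows_def)
    then have "admissible_columns (column_rows n T) \<inter> {c. c n = SA} = {}"
      by (auto simp: admissible_columns_def)
    then show ?thesis
      unfolding first_column_sum_def using False C by simp
  qed
qed

lemma free_row_gf_alphas_far_step:
  assumes "\<alpha> \<noteq> 0" "\<forall>k\<in>{1..r}. 2 \<le> js k \<and> js k \<le> m" "2 * r \<le> m"
    and IH: "free_row_gf \<alpha> \<beta> m (alphas_at m r (\<lambda>k. js k - 1)) (\<beta> * (y + 1))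
               = (\<alpha> * \<beta>) ^ m * (\<Prod>k=1..r. (y + 1) + real (js k - 1) - 2 * real k + 1)
                 * pochhammer (y + 1 + 1 / \<alpha>) (m - 2 * r)"
  shows "free_row_gf \<alpha> \<beta> (Suc m) (alphas_at (Suc m) r js) (\<beta> * y)
           = (\<alpha> * \<beta>) ^ Suc m * (\<Prod>k=1..r. y + real (js k) - 2 * real k + 1)
             * pochhammer (y + 1 / \<alpha>) (Suc m - 2 * r)"
proof -
  have weights: "\<alpha> * (\<beta> * y) + \<beta> = \<alpha> * \<beta> * (y + 1 / \<alpha>)" "\<beta> * y + \<beta> = \<beta> * (y + 1)"
    using assms(1) by (simp_all add: field_simps)
  have "(\<Prod>k=1..r. (y + 1) + real (js k - 1) - 2 * real k + 1)
      = (\<Prod>k=1..r. y + real (js k) - 2 * real k + 1)"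
  proof (rule prod.cong[OF refl])
    fix k assume "k \<in> {1..r}"
    then have "1 \<le> js k"
      using assms(2) by force
    then show "(y + 1) + real (js k - 1) - 2 * real k + 1 = y + real (js k) - 2 * real k + 1"
      by (simp add: of_nat_diff)
  qed
  moreover have "pochhammer (y + 1 / \<alpha>) (Suc m - 2 * r)
      = (y + 1 / \<alpha>) * pochhammer (y + 1 + 1 / \<alpha>) (m - 2 * r)"
    using assms(3) by (simp add: Suc_diff_le pochhammer_rec add_ac)
  ultimately show ?thesis
    using free_row_gf_alphas_Suc[OF assms(2), of \<alpha> \<beta> "\<beta> * y"]
    unfolding weights IH by (simp add: algebra_simps)
qed

lemma free_row_gf_alphas_near_step:
  assumes "js 1 = 1" "\<forall>k\<in>{1..r}. 3 \<le> js (Suc k) \<and> js (Suc k) \<le> Suc m" "2 * r \<le> m"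
    and IH: "free_row_gf \<alpha> \<beta> m (alphas_at m r (\<lambda>k. js (Suc k) - 2)) (\<beta> * y)
               = (\<alpha> * \<beta>) ^ m * (\<Prod>k=1..r. y + real (js (Suc k) - 2) - 2 * real k + 1)
                 * pochhammer (y + 1 / \<alpha>) (m - 2 * r)"
  shows "free_row_gf \<alpha> \<beta> (Suc (Suc m)) (alphas_at (Suc (Suc m)) (Suc r) js) (\<beta> * y)
           = (\<alpha> * \<beta>) ^ Suc (Suc m) * (\<Prod>k=1..Suc r. y + real (js k) - 2 * real k + 1)
             * pochhammer (y + 1 / \<alpha>) (Suc (Suc m) - 2 * Suc r)"
proof -
  let ?js = "\<lambda>k. js (Suc k)"
  have "alphas_at (Suc (Suc m)) (Suc r) js T
               \<longleftrightarrow> T (Suc m) 1 = SA \<and> alphas_at (Suc (Suc m)) r ?js T" for T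
    unfolding alphas_at_def ball_atLeastAtMost_Suc_split using assms(1) by simp
  then have "free_row_gf \<alpha> \<beta> (Suc (Suc m)) (alphas_at (Suc (Suc m)) (Suc r) js) (\<beta> * y)
      = free_row_gf \<alpha> \<beta> (Suc (Suc m))
          (\<lambda>T. T (Suc m) 1 = SA \<and> alphas_at (Suc (Suc m)) r ?js T) (\<beta> * y)"
    by (simp add: free_row_gf_def)
  also have "\<dots> = \<alpha> * \<beta> * free_row_gf \<alpha> \<beta> (Suc m)
                     (\<lambda>T. T (Suc m) 1 = SA \<and> alphas_at (Suc m) r (\<lambda>k. ?js k - 1) T) (\<beta> * y)"
    by (rule free_row_gf_alpha_above_bottom_Suc) (use assms(2) in auto)
  also have "\<dots> = \<alpha> * \<beta> * (\<alpha> * (\<beta> * y)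
                     * free_row_gf \<alpha> \<beta> m (alphas_at m r (\<lambda>k. ?js k - 1 - 1)) (\<beta> * y))"
    by (subst free_row_gf_alpha_bottom_Suc) (use assms(2) in auto)
  also have "(\<lambda>k. ?js k - 1 - 1) = (\<lambda>k. js (Suc k) - 2)"
    by auto
  finally have step: "free_row_gf \<alpha> \<beta> (Suc (Suc m)) (alphas_at (Suc (Suc m)) (Suc r) js) (\<beta> * y)
      = \<alpha> * \<beta> * (\<alpha> * (\<beta> * y) * free_row_gf \<alpha> \<beta> m (alphas_at m r (\<lambda>k. js (Suc k) - 2)) (\<beta> * y))" .
  have "(\<Prod>k=1..Suc r. y + real (js k) - 2 * real k + 1)
      = (y + real (js 1) - 2 * real (1::nat) + 1)
        * (\<Prod>k=Suc 1..Suc r. y + real (js k) - 2 * real k + 1)"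
    by (rule prod.atLeast_Suc_atMost) simp
  also have "(\<Prod>k=Suc 1..Suc r. y + real (js k) - 2 * real k + 1)
      = (\<Prod>k=1..r. y + real (js (Suc k)) - 2 * real (Suc k) + 1)"
    by (rule prod.shift_bounds_cl_Suc_ivl)
  also have "(\<Prod>k=1..r. y + real (js (Suc k)) - 2 * real (Suc k) + 1)
      = (\<Prod>k=1..r. y + real (js (Suc k) - 2) - 2 * real k + 1)"
  proof (rule prod.cong[OF refl])
    fix k assume "k \<in> {1..r}"
    then have "2 \<le> js (Suc k)"
      using assms(2) by force
    then show "y + real (js (Suc k)) - 2 * real (Suc k) + 1
        = y + real (js (Suc k) - 2) - 2 * real k + 1"
      by (simp add: of_nat_diff)
  qed
  finally show ?thesis
    unfolding step IH using assms(1,3) by (simp add: algebra_simps)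
qed

lemma free_row_gf_alphas_closed_form_far:
  fixes \<alpha> \<beta> y :: real
  assumes "\<alpha> \<noteq> 0"
    and range: "\<forall>k\<in>{1..r}. 1 \<le> js k \<and> js k < Suc m"
    and gap: "\<forall>k. 1 \<le> k \<and> k < r \<longrightarrow> js k + 2 \<le> js (Suc k)"
    and far: "r = 0 \<or> 2 \<le> js 1"
    and IH: "\<forall>k\<in>{1..r}. 1 \<le> js k - 1 \<and> js k - 1 < m \<Longrightarrow>
             \<forall>k. 1 \<le> k \<and> k < r \<longrightarrow> js k - 1 + 2 \<le> js (Suc k) - 1 \<Longrightarrow>
             free_row_gf \<alpha> \<beta> m (alphas_at m r (\<lambda>k. js k - 1)) (\<beta> * (y + 1))
               = (\<alpha> * \<beta>) ^ m * (\<Prod>k=1..r. (y + 1) + real (js k - 1) - 2 * real k + 1)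
                 * pochhammer (y + 1 + 1 / \<alpha>) (m - 2 * r)"
  shows "free_row_gf \<alpha> \<beta> (Suc m) (alphas_at (Suc m) r js) (\<beta> * y)
           = (\<alpha> * \<beta>) ^ Suc m * (\<Prod>k=1..r. y + real (js k) - 2 * real k + 1)
             * pochhammer (y + 1 / \<alpha>) (Suc m - 2 * r)"
proof -
  have lower: "js 1 + 2 * (k - 1) \<le> js k" if "k \<in> {1..r}" for k
    using stepwise_growth[of 1 "k - 1" js 2] gap that by auto
  have js: "\<forall>k\<in>{1..r}. 2 \<le> js k \<and> js k \<le> m"
  proof
    fix k assume k: "k \<in> {1..r}"
    then have "2 \<le> js 1"
      using far by auto
    then show "2 \<le> js k \<and> js k \<le> m"
      using lower[OF k] range k by force
  qed
  have r: "2 * r \<le> m"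
  proof (cases "r = 0")
    case False
    then have "1 \<in> {1..r}" "r \<in> {1..r}"
      by auto
    then have "2 \<le> js 1" "js r \<le> m" "js 1 + 2 * (r - 1) \<le> js r"
      using js lower by blast+
    then show ?thesis
      using False by linarith
  qed simp
  have "\<forall>k\<in>{1..r}. 1 \<le> js k - 1 \<and> js k - 1 < m"
    using js by force
  moreover have "\<forall>k. 1 \<le> k \<and> k < r \<longrightarrow> js k - 1 + 2 \<le> js (Suc k) - 1"
    using gap js by force
  ultimately show ?thesis
    using free_row_gf_alphas_far_step[OF assms(1) js r IH] by simp
qed

lemma free_row_gf_alphas_closed_form_near:
  fixes \<alpha> \<beta> y :: real
  assumes range: "\<forall>k\<in>{1..Suc r}. 1 \<le> js k \<and> js k < Suc (Suc m)"
    and gap: "\<forall>k. 1 \<le> k \<and> k < Suc r \<longrightarrow> js k + 2 \<le> js (Suc k)"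
    and js1: "js 1 = 1"
    and IH: "\<forall>k\<in>{1..r}. 1 \<le> js (Suc k) - 2 \<and> js (Suc k) - 2 < m \<Longrightarrow>
             \<forall>k. 1 \<le> k \<and> k < r \<longrightarrow> js (Suc k) - 2 + 2 \<le> js (Suc (Suc k)) - 2 \<Longrightarrow>
             free_row_gf \<alpha> \<beta> m (alphas_at m r (\<lambda>k. js (Suc k) - 2)) (\<beta> * y)
               = (\<alpha> * \<beta>) ^ m * (\<Prod>k=1..r. y + real (js (Suc k) - 2) - 2 * real k + 1)
                 * pochhammer (y + 1 / \<alpha>) (m - 2 * r)"
  shows "free_row_gf \<alpha> \<beta> (Suc (Suc m)) (alphas_at (Suc (Suc m)) (Suc r) js) (\<beta> * y)
           = (\<alpha> * \<beta>) ^ Suc (Suc m) * (\<Prod>k=1..Suc r. y + real (js k) - 2 * real k + 1)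
             * pochhammer (y + 1 / \<alpha>) (Suc (Suc m) - 2 * Suc r)"
proof -
  have lower: "js 1 + 2 * (k - 1) \<le> js k" if "k \<in> {1..Suc r}" for k
    using stepwise_growth[of 1 "k - 1" js 2] gap that by auto
  have js: "\<forall>k\<in>{1..r}. 3 \<le> js (Suc k) \<and> js (Suc k) \<le> Suc m"
  proof
    fix k assume k: "k \<in> {1..r}"
    then have "Suc k \<in> {1..Suc r}"
      by auto
    then have "js 1 + 2 * (Suc k - 1) \<le> js (Suc k)" "js (Suc k) < Suc (Suc m)"
      using lower range by blast+
    then show "3 \<le> js (Suc k) \<and> js (Suc k) \<le> Suc m"
      using k js1 by auto
  qed
  have "Suc r \<in> {1..Suc r}"
    by simp
  then have "js 1 + 2 * r \<le> js (Suc r)" "js (Suc r) < Suc (Suc m)"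
    using lower range by fastforce+
  then have r: "2 * r \<le> m"
    using js1 by linarith
  have "\<forall>k\<in>{1..r}. 1 \<le> js (Suc k) - 2 \<and> js (Suc k) - 2 < m"
    using js by force
  moreover have "\<forall>k. 1 \<le> k \<and> k < r \<longrightarrow> js (Suc k) - 2 + 2 \<le> js (Suc (Suc k)) - 2"
    using gap js by force
  ultimately show ?thesis
    using free_row_gf_alphas_near_step[OF js1 js r IH] by simp
qed

lemma free_row_gf_alphas_closed_form:
  fixes \<alpha> \<beta> y :: real
  assumes "\<alpha> \<noteq> 0"
  shows "(\<forall>k\<in>{1..r}. 1 \<le> js k \<and> js k < n) \<Longrightarrow> (\<forall>k. 1 \<le> k \<and> k < r \<longrightarrow> js k + 2 \<le> js (Suc k)) \<Longrightarrow>
    free_row_gf \<alpha> \<beta> n (alphas_at n r js) (\<beta> * y)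
      = (\<alpha> * \<beta>) ^ n * (\<Prod>k=1..r. y + real (js k) - 2 * real k + 1)
        * pochhammer (y + 1 / \<alpha>) (n - 2 * r)"
proof (induction n arbitrary: r js y rule: less_induct)
  case (less n)
  show ?case
  proof (cases n)
    case 0
    then have "r = 0"
      using less.prems(1) by fastforce
    then show ?thesis
      using 0 by (simp add: free_row_gf_0)
  next
    case (Suc m)
    show ?thesis
    proof (cases "r = 0 \<or> 2 \<le> js 1")
      case True
      have "m < n"
        using Suc by simp
      then show ?thesis
        using free_row_gf_alphas_closed_form_far[OF assms less.prems[unfolded Suc] True less.IH]
        unfolding Suc by blast
    next
      case False
      then obtain r' where r': "r = Suc r'"
        using not0_implies_Suc by blast
      then have "1 \<le> js 1" "js 1 < Suc m"
        using less.prems(1) Suc by auto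
      then have js1: "js 1 = 1"
        using False by linarith
      then obtain m' where m': "m = Suc m'"
        using \<open>js 1 < Suc m\<close> by (cases m) auto
      have "m' < n"
        using Suc m' by simp
      then show ?thesis
        using free_row_gf_alphas_closed_form_near[OF less.prems[unfolded Suc m' r'] js1 less.IH]
        unfolding Suc m' r' by blast
    qed
  qed
qed

section \<open>The probability of prescribed second-diagonal \<open>\<alpha>\<close>'s\<close>

lemma second_diagonal_alphas_not_adjacent:
  assumes T: "T \<in> stair n" and "1 \<le> j" "j + 1 < n" "T (n - j) j = SA"
  shows "T (n - (j + 1)) (j + 1) \<noteq> SA"
proof
  assume upper: "T (n - (j + 1)) (j + 1) = SA"
  have "T (n - j) (j + 1) \<noteq> Emp"
    using staircase_tableauxD(4)[OF T, of "n - j" "j + 1"] assms(2,3) by auto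
  then consider "T (n - j) (j + 1) = SA" | "T (n - j) (j + 1) = SB"
    by (cases "T (n - j) (j + 1)") auto
  then show False
  proof cases
    case 1
    then have "T (n - (j + 1)) (j + 1) = Emp"
      using staircase_tableauxD(2)[OF T, of "n - j" "j + 1" "n - (j + 1)"] assms(3) by auto
    then show False
      using upper by simp
  next
    case 2
    then have "T (n - j) j = Emp"
      using staircase_tableauxD(3)[OF T, of "n - j" "j + 1" j] assms(2) by auto
    then show False
      using assms(4) by simp
  qed
qed

lemma Pstair_Inter_alpha_event:
  "Pstair n \<alpha> \<beta> (\<Inter>k\<in>{1..r}. alpha_event n (js k))
     = free_row_gf \<alpha> \<beta> n (alphas_at n r js) 1 / free_row_gf \<alpha> \<beta> n (\<lambda>T. True) 1"
proof -
  have "stair n \<inter> (\<Inter>k\<in>{1..r}. alpha_event n (js k)) = {T \<in> stair n. alphas_at n r js T}"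
    by (auto simp: alpha_event_def alphas_at_def)
  then show ?thesis
    by (simp add: Pstair_def Zn_def free_row_gf_def)
qed

lemma alpha_events_probability_formula:
  fixes a b :: real
  assumes "a > 0" "b > 0" "2 * r \<le> n"
  shows "(\<Prod>k=1..r. b + real (js k) - 2 * real k + 1) * pochhammer (b + a) (n - 2 * r)
           / pochhammer (b + a) n
         = (\<Prod>k=1..r. (b + real (js (r - k + 1)) - 2 * real r + 2 * real k - 1) /
              ((real n + a + b - 2 * real r + 2 * real k - 1)
               * (real n + a + b - 2 * real r + 2 * real k - 2)))"
proof -
  let ?c = "real n + a + b - 2 * real r"
  let ?P = "pochhammer (b + a) (n - 2 * r)"
  have "pochhammer (b + a) n = ?P * pochhammer (b + a + real (n - 2 * r)) (2 * r)"
    using pochhammer_product[of "n - 2 * r" n "b + a"] assms(3) by (simp del: of_nat_diff)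
  also have "b + a + real (n - 2 * r) = ?c"
    using assms(3) by (simp add: of_nat_diff)
  also have "pochhammer ?c (2 * r)
      = (\<Prod>k=1..r. (real n + a + b - 2 * real r + 2 * real k - 1)
                    * (real n + a + b - 2 * real r + 2 * real k - 2))"
    unfolding pochhammer_double by (intro prod.cong refl) (simp add: algebra_simps)
  finally have denominator: "pochhammer (b + a) n = ?P * \<dots>" .
  have "?P \<noteq> 0"
    using pochhammer_pos[of "b + a"] assms(1,2) by (metis add_pos_pos less_irrefl)
  moreover have "(\<Prod>k=1..r. b + real (js k) - 2 * real k + 1)
      = (\<Prod>k=1..r. b + real (js (r + 1 - k)) - 2 * real (r + 1 - k) + 1)"
    by (rule prod.atLeastAtMost_rev)
  moreover have "\<dots> = (\<Prod>k=1..r. b + real (js (r - k + 1)) - 2 * real r + 2 * real k - 1)"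
    by (intro prod.cong refl) (auto simp: of_nat_diff Suc_diff_le)
  ultimately show ?thesis
    unfolding denominator prod_dividef by simp
qed

lemma Pstair_Inter_alpha_event_separated:
  assumes "\<alpha> > 0" "\<beta> > 0" "a = 1 / \<alpha>" "b = 1 / \<beta>"
    and range: "\<forall>k\<in>{1..r}. 1 \<le> js k \<and> js k < n"
    and gap: "\<forall>k. 1 \<le> k \<and> k < r \<longrightarrow> js k + 2 \<le> js (Suc k)"
  shows "Pstair n \<alpha> \<beta> (\<Inter>k\<in>{1..r}. alpha_event n (js k)) =
           (\<Prod>k=1..r. (b + real (js (r - k + 1)) - 2 * real r + 2 * real k - 1) /
              ((real n + a + b - 2 * real r + 2 * real k - 1)
               * (real n + a + b - 2 * real r + 2 * real k - 2)))"
proof -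
  have "2 * r \<le> n"
  proof (cases "r = 0")
    case False
    then have "js 1 + 2 * (r - 1) \<le> js (1 + (r - 1))" "1 \<le> js 1" "js r < n"
      using stepwise_growth[of 1 "r - 1" js 2] gap range by auto
    then show ?thesis
      using False by simp
  qed simp
  have "\<beta> * b = 1" "1 / \<alpha> = a"
    using assms(2-4) by simp_all
  then have "free_row_gf \<alpha> \<beta> n (alphas_at n r js) 1
      = (\<alpha> * \<beta>) ^ n
        * ((\<Prod>k=1..r. b + real (js k) - 2 * real k + 1) * pochhammer (b + a) (n - 2 * r))"
    and "free_row_gf \<alpha> \<beta> n (\<lambda>T. True) 1 = (\<alpha> * \<beta>) ^ n * pochhammer (b + a) n"
    using free_row_gf_alphas_closed_form[of \<alpha> r js n \<beta> b]
      free_row_gf_alphas_closed_form[of \<alpha> 0 js n \<beta> b]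
      range gap assms(1) by simp_all
  moreover have "(\<alpha> * \<beta>) ^ n \<noteq> 0"
    using assms(1,2) by simp
  ultimately show ?thesis
    unfolding Pstair_Inter_alpha_event
    using alpha_events_probability_formula[of a b r n js] \<open>2 * r \<le> n\<close> assms(1-4) by simp
qed

lemma Pstair_Inter_alpha_event_adjacent:
  assumes range: "\<forall>k\<in>{1..r}. 1 \<le> js k \<and> js k < n"
    and k: "1 \<le> k" "k < r" "js (Suc k) = Suc (js k)"
  shows "Pstair n \<alpha> \<beta> (\<Inter>k\<in>{1..r}. alpha_event n (js k)) = 0"
proof -
  have "k \<in> {1..r}" "Suc k \<in> {1..r}"
    using k by auto
  then have j: "1 \<le> js k" "js k + 1 < n"
    using range k(3) by fastforce+
  have "\<not> alphas_at n r js T" if "T \<in> stair n" for T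
  proof
    assume "alphas_at n r js T"
    then have "T (n - js k) (js k) = SA" "T (n - (js k + 1)) (js k + 1) = SA"
      using \<open>k \<in> {1..r}\<close> \<open>Suc k \<in> {1..r}\<close> k(3) unfolding alphas_at_def by fastforce+
    then show False
      using second_diagonal_alphas_not_adjacent[OF that j] by blast
  qed
  then have no_tableau: "{T \<in> stair n. alphas_at n r js T} = {}"
    by blast
  show ?thesis
    unfolding Pstair_Inter_alpha_event free_row_gf_def no_tableau by simp
qed

theorem theorem3p3:
  fixes n r :: nat and \<alpha> \<beta> a b :: real and js :: "nat \<Rightarrow> nat"
  assumes "n \<ge> 2" and "\<alpha> > 0" and "\<beta> > 0"
    and "a = 1 / \<alpha>" and "b = 1 / \<beta>"
    and "r \<ge> 1"
    and "1 \<le> js 1" and "js r \<le> n - 1"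
    and "\<forall>k. 1 \<le> k \<and> k < r \<longrightarrow> js k < js (k + 1)"
  shows "((\<forall>k. 1 \<le> k \<and> k < r \<longrightarrow> js k + 2 \<le> js (k + 1)) \<longrightarrow>
           Pstair n \<alpha> \<beta> (\<Inter>k\<in>{1..r}. alpha_event n (js k)) =
           (\<Prod>k=1..r. (b + real (js (r - k + 1)) - 2 * real r + 2 * real k - 1) /
              ((real n + a + b - 2 * real r + 2 * real k - 1) * (real n + a + b - 2 * real r + 2 * real k - 2))))
       \<and> ((\<not> (\<forall>k. 1 \<le> k \<and> k < r \<longrightarrow> js k + 2 \<le> js (k + 1))) \<longrightarrow>
           Pstair n \<alpha> \<beta> (\<Inter>k\<in>{1..r}. alpha_event n (js k)) = 0)"
proof -
  have range: "\<forall>k\<in>{1..r}. 1 \<le> js k \<and> js k < n"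
  proof
    fix k assume k: "k \<in> {1..r}"
    have "js 1 + 1 * (k - 1) \<le> js (1 + (k - 1))" "js k + 1 * (r - k) \<le> js (k + (r - k))"
      by (intro stepwise_growth; use assms(9) k in \<open>auto simp: Suc_le_eq\<close>)+
    then show "1 \<le> js k \<and> js k < n"
      using k assms(1,7,8) by auto
  qed
  have "\<exists>k. 1 \<le> k \<and> k < r \<and> js (Suc k) = Suc (js k)"
    if "\<not> (\<forall>k. 1 \<le> k \<and> k < r \<longrightarrow> js k + 2 \<le> js (k + 1))"
    using that assms(9) by force
  then show ?thesis
    using Pstair_Inter_alpha_event_separated[OF assms(2-5) range]
      Pstair_Inter_alpha_event_adjacent[OF range] by auto
qed

end
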